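(* Let $\vec v_1,\dots,\vec v_l$ be $l$ distinct unit vectors in $\mathbb{R}^3$ with multiplicities $m_i\in\mathbb{N}$ sorted in descending order ($m_1\ge m_2\ge\dots\ge m_l$), such that $\sum_{i=1}^l m_i=n$ for some $n\ge3$ and $m_1<\sum_{i=2}^l m_i$. For $\alpha\in[0,1)$ let $f_\alpha$ be the map on spherical coordinates $(\theta,\phi)\in[0,\pi]\times[0,2\pi]$ given by $f_\alpha(\theta,\phi)=\big(2\arctan\big(\tfrac{1}{1-\alpha}\tan(\theta/2)\big),\phi\big)$ (so that $\theta=0$ and $\theta=\pi$ are fixed), acting on unit vectors $\vec v=(\sin\theta\cos\phi,\sin\theta\sin\phi,\cos\theta)^T$. Then there exist a rotation $O\in SO(3)$ and $\alpha\in[0,1)$ such that the vectors $\vec v_i'=f_\alpha(O\vec v_i)$ satisfy $\sum_{i=1}^l m_i\vec v_i'=\vec 0$. *)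

theory Defs
  imports "HOL-Analysis.Analysis"
begin

definition sph :: "real \<Rightarrow> real \<Rightarrow> real^3" where
  "sph \<theta> \<phi> = vector [sin \<theta> * cos \<phi>, sin \<theta> * sin \<phi>, cos \<theta>]"

text \<open>Polar angle map of f_alpha; the endpoint theta = pi is fixed by convention
  (the informal formula has tan(pi/2) = infinity there).\<close>
definition f_theta :: "real \<Rightarrow> real \<Rightarrow> real" where
  "f_theta \<alpha> \<theta> = (if \<theta> = pi then pi else 2 * arctan (tan (\<theta> / 2) / (1 - \<alpha>)))"

definition f_alpha :: "real \<Rightarrow> real^3 \<Rightarrow> real^3" where
  "f_alpha \<alpha> v =
     (let \<theta> = arccos (v $ 3);
          \<phi> = (SOME \<phi>. 0 \<le> \<phi> \<and> \<phi> \<le> 2 * pi \<and> sph \<theta> \<phi> = v)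
      in sph (f_theta \<alpha> \<theta>) \<phi>)"

end

theory Submission
  imports Defs
begin

text \<open>View the unit vectors as ideal points of the Poincare ball model of hyperbolic space.
  The weighted sum of their Busemann functions tends to infinity at the boundary sphere, precisely
  because no single weight reaches half of the total; so it has a minimum x inside the ball. Its
  gradient at x is a negative multiple of the weighted sum of the images of the points under the
  Moebius automorphism of the ball moving x to the origin, hence these images are balanced
  (the conformal barycentre of Douady and Earle). After a rotation taking x to (0, 0, s), that
  Moebius map is f_alpha with alpha = 2s/(1+s): in stereographic coordinates from the south pole
  both are the dilation by the factor (1+s)/(1-s).\<close>

section \<open>Conformal barycentre of weighted points on the sphere\<close>

text \<open>On the unit sphere this agrees with the Moebius automorphism of the unit ball sending a to 0;
  only its values on the sphere matter here.\<close>
definition moebius :: "'a::real_inner \<Rightarrow> 'a \<Rightarrow> 'a" where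
  "moebius a w = ((1 - (norm a)\<^sup>2) / (norm (w - a))\<^sup>2) *\<^sub>R (w - a) - a"

text \<open>The Busemann function of the ideal point v of the Poincare ball, up to an additive constant.\<close>
definition busemann :: "'a::real_inner \<Rightarrow> 'a \<Rightarrow> real" where
  "busemann v x = ln ((norm (x - v))\<^sup>2) - ln (1 - (norm x)\<^sup>2)"

lemma busemann_has_derivative:
  fixes x v :: "'a::real_inner"
  assumes "norm x < 1" and "x \<noteq> v"
  shows "(busemann v has_derivative
           (\<lambda>h. - (2 / (1 - (norm x)\<^sup>2)) * inner (moebius x v) h)) (at x)"
proof -
  define U where "U = 1 - x \<bullet> x"
  define A where "A = (x - v) \<bullet> (x - v)"
  have "0 < U" "0 < A"
    using assms by (simp_all add: U_def A_def flip: power2_norm_eq_inner add: abs_square_less_1)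
  have "((\<lambda>y. ln ((y - v) \<bullet> (y - v)) - ln (1 - y \<bullet> y)) has_derivative
      (\<lambda>h. 2 * (h \<bullet> (x - v)) / A + 2 * (h \<bullet> x) / U)) (at x)"
    using \<open>0 < U\<close> \<open>0 < A\<close> unfolding U_def A_def
    by (auto intro!: derivative_eq_intros simp: inner_commute divide_inverse)
  moreover have "- (2 / U) * inner (moebius x v) h = 2 * (h \<bullet> (x - v)) / A + 2 * (h \<bullet> x) / U" for h
  proof -
    have "moebius x v = (U / A) *\<^sub>R (v - x) - x"
      unfolding moebius_def U_def A_def by (simp only: norm_minus_commute[of v x] power2_norm_eq_inner)
    then have "inner (moebius x v) h = U / A * - (h \<bullet> (x - v)) - h \<bullet> x"
      by (simp add: inner_commute inner_diff_right)
    with \<open>0 < U\<close> \<open>0 < A\<close> show ?thesis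
      by (simp add: field_simps)
  qed
  ultimately show ?thesis
    unfolding busemann_def power2_norm_eq_inner U_def A_def by simp
qed

lemma busemann_sum_has_derivative:
  fixes v :: "'i \<Rightarrow> 'a::real_inner"
  assumes "norm x < 1" and "\<And>i. i \<in> I \<Longrightarrow> norm (v i) = 1"
  shows "((\<lambda>y. \<Sum>i\<in>I. w i * busemann (v i) y) has_derivative
           (\<lambda>h. - (2 / (1 - (norm x)\<^sup>2)) * inner (\<Sum>i\<in>I. w i *\<^sub>R moebius x (v i)) h)) (at x)"
proof -
  have "x \<noteq> v i" if "i \<in> I" for i
    using assms that by auto
  then have "((\<lambda>y. \<Sum>i\<in>I. w i * busemann (v i) y) has_derivative
      (\<lambda>h. \<Sum>i\<in>I. w i * (- (2 / (1 - (norm x)\<^sup>2)) * inner (moebius x (v i)) h))) (at x)"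
    using assms(1) by (intro has_derivative_sum has_derivative_mult_right busemann_has_derivative)
  then show ?thesis
    by (simp add: inner_sum_left sum_distrib_left mult.left_commute)
qed

lemma busemann_ge_unit:
  fixes x v :: "'a::real_inner"
  assumes "norm v = 1" and "norm x < 1"
  shows "ln (1 - (norm x)\<^sup>2) - 2 * ln 2 \<le> busemann v x"
proof -
  define u where "u = 1 - (norm x)\<^sup>2"
  have "u = (1 - norm x) * (1 + norm x)"
    by (simp add: u_def power2_eq_square algebra_simps)
  moreover have "0 < 1 - norm x" "0 < 1 + norm x" "1 + norm x \<le> 2"
    using assms(2) norm_ge_zero[of x] by linarith+
  ultimately have u: "0 < u" "u \<le> (1 - norm x) * 2"
    by (simp, metis less_eq_real_def mult_left_mono)
  have "u / 2 \<le> norm (x - v)"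
    using u norm_triangle_ineq2[of v x] assms(1) by (simp add: norm_minus_commute)
  then have "(u / 2)\<^sup>2 \<le> (norm (x - v))\<^sup>2"
    using u by (simp add: power_mono)
  then have "ln ((u / 2)\<^sup>2) \<le> ln ((norm (x - v))\<^sup>2)"
    using u by (intro ln_mono) auto
  also have "ln ((u / 2)\<^sup>2) = 2 * ln u - 2 * ln 2"
    using u by (simp add: ln_realpow ln_div)
  finally show ?thesis
    by (simp add: busemann_def u_def)
qed

lemma busemann_ge_dist:
  fixes x v :: "'a::real_inner"
  assumes "0 < \<delta>" and "\<delta> \<le> norm (x - v)"
  shows "2 * ln \<delta> - ln (1 - (norm x)\<^sup>2) \<le> busemann v x"
proof -
  have "\<delta>\<^sup>2 \<le> (norm (x - v))\<^sup>2"
    using assms by (simp add: power_mono)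
  then have "ln (\<delta>\<^sup>2) \<le> ln ((norm (x - v))\<^sup>2)"
    using assms by (intro ln_mono) auto
  then show ?thesis
    using assms(1) by (simp add: busemann_def ln_realpow)
qed

lemma finite_inj_on_separated:
  fixes v :: "'i \<Rightarrow> 'a::metric_space"
  assumes "finite I" and "inj_on v I"
  obtains \<delta> where "0 < \<delta>" "\<delta> \<le> 1"
    "\<And>i j. i \<in> I \<Longrightarrow> j \<in> I \<Longrightarrow> i \<noteq> j \<Longrightarrow> 2 * \<delta> \<le> dist (v i) (v j)"
proof
  define D where "D = insert 2 ((\<lambda>(i, j). dist (v i) (v j)) ` {(i, j) \<in> I \<times> I. i \<noteq> j})"
  have "finite {(i, j) \<in> I \<times> I. i \<noteq> j}"
    by (rule finite_subset[of _ "I \<times> I"]) (auto simp: assms(1))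
  then have "finite D"
    by (simp add: D_def)
  moreover have "0 < d" if "d \<in> D" for d
    using that assms(2) by (auto simp: D_def inj_on_def)
  ultimately show "0 < Min D / 2" "Min D / 2 \<le> 1"
    by (simp_all add: D_def)
  show "2 * (Min D / 2) \<le> dist (v i) (v j)" if "i \<in> I" "j \<in> I" "i \<noteq> j" for i j
  proof -
    have "dist (v i) (v j) \<in> D"
      using that by (auto simp: D_def)
    with \<open>finite D\<close> show ?thesis
      by simp
  qed
qed

lemma finite_strict_upper_bound_gap:
  fixes f :: "'i \<Rightarrow> real"
  assumes "finite I" and "\<And>j. j \<in> I \<Longrightarrow> f j < c"
  obtains \<gamma> where "0 < \<gamma>" "\<And>j. j \<in> I \<Longrightarrow> f j + \<gamma> \<le> c"
proof
  define G where "G = insert 1 ((\<lambda>j. c - f j) ` I)"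
  show "0 < Min G"
    using assms by (simp add: G_def)
  show "f j + Min G \<le> c" if "j \<in> I" for j
  proof -
    have "finite G" "c - f j \<in> G"
      using assms(1) that by (simp_all add: G_def)
    then have "Min G \<le> c - f j"
      by (rule Min_le)
    then show ?thesis
      by simp
  qed
qed

lemma busemann_sum_ge_dist:
  fixes v :: "'i \<Rightarrow> 'a::real_inner"
  assumes "\<And>i. i \<in> J \<Longrightarrow> 0 \<le> w i" and "0 < \<delta>" and "\<And>i. i \<in> J \<Longrightarrow> \<delta> \<le> norm (x - v i)"
  shows "sum w J * (2 * ln \<delta> - ln (1 - (norm x)\<^sup>2)) \<le> (\<Sum>i\<in>J. w i * busemann (v i) x)"
  unfolding sum_distrib_right
  using assms by (intro sum_mono mult_left_mono busemann_ge_dist) auto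

lemma separated_near_at_most_one:
  fixes x :: "'a::real_normed_vector"
  assumes "2 * \<delta> \<le> dist u v" and "norm (x - v) < \<delta>"
  shows "\<delta> \<le> norm (x - u)"
proof -
  have "2 * \<delta> \<le> norm (x - u) + norm (x - v)"
    using assms(1) dist_triangle2[of u v x] by (simp add: dist_norm norm_minus_commute)
  with assms(2) show ?thesis
    by simp
qed

lemma busemann_sum_lower_bound:
  fixes v :: "'i \<Rightarrow> 'a::real_inner"
  assumes "finite I" and "I \<noteq> {}"
    and nonneg: "\<And>i. i \<in> I \<Longrightarrow> 0 \<le> w i"
    and unit: "\<And>i. i \<in> I \<Longrightarrow> norm (v i) = 1"
    and "0 < \<delta>" and "\<delta> \<le> 1"
    and sep: "\<And>i j. i \<in> I \<Longrightarrow> j \<in> I \<Longrightarrow> i \<noteq> j \<Longrightarrow> 2 * \<delta> \<le> dist (v i) (v j)"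
    and "0 \<le> \<gamma>" and gap: "\<And>j. j \<in> I \<Longrightarrow> 2 * w j + \<gamma> \<le> sum w I"
    and "norm x < 1"
  shows "- \<gamma> * ln (1 - (norm x)\<^sup>2) + 2 * sum w I * (ln \<delta> - ln 2)
           \<le> (\<Sum>i\<in>I. w i * busemann (v i) x)"
proof -
  define L where "L = ln (1 - (norm x)\<^sup>2)"
  define W where "W = sum w I"
  have "L \<le> 0"
    using \<open>norm x < 1\<close> by (simp add: L_def abs_square_less_1)
  have "ln \<delta> \<le> 0" "0 \<le> ln (2::real)"
    using \<open>0 < \<delta>\<close> \<open>\<delta> \<le> 1\<close> by simp_all
  \<comment> \<open>At most one v j is close to x. It contributes at least w j * (L - 2 ln 2), the others
    at least (W - w j) * (2 ln \<delta> - L); as W - 2 w j \<ge> \<gamma>, the total is at least - \<gamma> L + const.\<close>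
  obtain j where "j \<in> I" and "\<And>i. i \<in> I - {j} \<Longrightarrow> \<delta> \<le> norm (x - v i)"
  proof (cases "\<exists>j\<in>I. norm (x - v j) < \<delta>")
    case True
    then obtain j where "j \<in> I" "norm (x - v j) < \<delta>"
      by blast
    with that show thesis
      using separated_near_at_most_one sep by blast
  next
    case False
    with \<open>I \<noteq> {}\<close> that show thesis
      by (auto simp: not_less)
  qed
  then have "sum w (I - {j}) * (2 * ln \<delta> - L) \<le> (\<Sum>i\<in>I - {j}. w i * busemann (v i) x)"
    unfolding L_def using nonneg \<open>0 < \<delta>\<close> by (intro busemann_sum_ge_dist) auto
  moreover have "sum w (I - {j}) = W - w j"
    using \<open>finite I\<close> \<open>j \<in> I\<close> by (simp add: W_def sum_diff1)
  ultimately have "(W - w j) * (2 * ln \<delta> - L) \<le> (\<Sum>i\<in>I - {j}. w i * busemann (v i) x)"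
    by simp
  moreover have "w j * (L - 2 * ln 2) \<le> w j * busemann (v j) x"
    using busemann_ge_unit[OF unit[OF \<open>j \<in> I\<close>] \<open>norm x < 1\<close>] nonneg[OF \<open>j \<in> I\<close>]
    by (simp add: L_def mult_left_mono)
  moreover have "(W - 2 * w j - \<gamma>) * L \<le> 0" "w j * ln 2 \<le> W * ln 2" "w j * ln \<delta> \<le> 0"
    using gap[OF \<open>j \<in> I\<close>] nonneg[OF \<open>j \<in> I\<close>] \<open>0 \<le> \<gamma>\<close> \<open>L \<le> 0\<close> \<open>ln \<delta> \<le> 0\<close> \<open>0 \<le> ln 2\<close>
    by (auto simp: W_def mult_nonneg_nonpos intro: mult_right_mono)
  moreover have "(\<Sum>i\<in>I. w i * busemann (v i) x)
      = w j * busemann (v j) x + (\<Sum>i\<in>I - {j}. w i * busemann (v i) x)"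
    using \<open>finite I\<close> \<open>j \<in> I\<close> by (simp add: sum.remove)
  ultimately show ?thesis
    unfolding W_def[symmetric] L_def[symmetric] by argo
qed

lemma busemann_sum_pos_near_boundary:
  fixes v :: "'i \<Rightarrow> 'a::real_inner"
  assumes "finite I" and "I \<noteq> {}" and "inj_on v I"
    and nonneg: "\<And>i. i \<in> I \<Longrightarrow> 0 \<le> w i"
    and unit: "\<And>i. i \<in> I \<Longrightarrow> norm (v i) = 1"
    and small: "\<And>j. j \<in> I \<Longrightarrow> 2 * w j < sum w I"
  obtains r where "0 \<le> r" "r < 1"
    "\<And>y. r < norm y \<Longrightarrow> norm y < 1 \<Longrightarrow> 0 < (\<Sum>i\<in>I. w i * busemann (v i) y)"
proof -
  obtain \<delta> where \<delta>: "0 < \<delta>" "\<delta> \<le> 1"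
    and sep: "\<And>i j. i \<in> I \<Longrightarrow> j \<in> I \<Longrightarrow> i \<noteq> j \<Longrightarrow> 2 * \<delta> \<le> dist (v i) (v j)"
    using finite_inj_on_separated[OF \<open>finite I\<close> \<open>inj_on v I\<close>] by blast
  obtain \<gamma> where "0 < \<gamma>" and gap: "\<And>j. j \<in> I \<Longrightarrow> 2 * w j + \<gamma> \<le> sum w I"
    using finite_strict_upper_bound_gap[of I "\<lambda>j. 2 * w j", OF \<open>finite I\<close> small] by blast
  define C where "C = 2 * sum w I * (ln \<delta> - ln 2)"
  define \<epsilon> where "\<epsilon> = exp (- (\<bar>C\<bar> + 1) / \<gamma>)"
  have "0 < \<epsilon>" "\<epsilon> < 1"
    using \<open>0 < \<gamma>\<close> by (simp_all add: \<epsilon>_def divide_neg_pos)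
  show thesis
  proof (rule that[of "sqrt (1 - \<epsilon>)"])
    show "0 \<le> sqrt (1 - \<epsilon>)" "sqrt (1 - \<epsilon>) < 1"
      using \<open>0 < \<epsilon>\<close> \<open>\<epsilon> < 1\<close> by simp_all
    fix y :: 'a
    assume "sqrt (1 - \<epsilon>) < norm y" and "norm y < 1"
    then have "sqrt (1 - \<epsilon>) < sqrt ((norm y)\<^sup>2)"
      by simp
    then have "1 - (norm y)\<^sup>2 \<le> \<epsilon>"
      by (simp only: real_sqrt_less_iff)
    moreover have "0 < 1 - (norm y)\<^sup>2"
      using \<open>norm y < 1\<close> by (simp add: abs_square_less_1)
    ultimately have "ln (1 - (norm y)\<^sup>2) \<le> - (\<bar>C\<bar> + 1) / \<gamma>"
      using ln_mono by (fastforce simp: \<epsilon>_def)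
    then have "\<bar>C\<bar> + 1 \<le> - \<gamma> * ln (1 - (norm y)\<^sup>2)"
      using \<open>0 < \<gamma>\<close> by (simp add: field_simps)
    moreover have "- \<gamma> * ln (1 - (norm y)\<^sup>2) + C \<le> (\<Sum>i\<in>I. w i * busemann (v i) y)"
      unfolding C_def
      using busemann_sum_lower_bound[OF \<open>finite I\<close> \<open>I \<noteq> {}\<close> nonneg unit \<delta> sep _ gap \<open>norm y < 1\<close>]
        \<open>0 < \<gamma>\<close> by simp
    ultimately show "0 < (\<Sum>i\<in>I. w i * busemann (v i) y)"
      by linarith
  qed
qed

lemma continuous_on_unit_ball_attains_min:
  fixes f :: "'a::euclidean_space \<Rightarrow> real"
  assumes "continuous_on (ball 0 1) f" and "0 \<le> r" and "r < 1"
    and "\<And>y. r < norm y \<Longrightarrow> norm y < 1 \<Longrightarrow> f 0 < f y"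
  obtains X where "norm X < 1" "\<And>y. norm y < 1 \<Longrightarrow> f X \<le> f y"
proof -
  have "cball 0 r \<subseteq> ball (0::'a) 1"
    using \<open>r < 1\<close> by auto
  then have "continuous_on (cball 0 r) f"
    by (rule continuous_on_subset[OF assms(1)])
  moreover have "0 \<in> cball (0::'a) r"
    using \<open>0 \<le> r\<close> by simp
  ultimately obtain X where "X \<in> cball 0 r" and X_min: "\<And>y. y \<in> cball 0 r \<Longrightarrow> f X \<le> f y"
    using continuous_attains_inf[OF compact_cball] by blast
  have "f X \<le> f y" if "norm y < 1" for y
  proof (cases "norm y \<le> r")
    case False
    then show ?thesis
      using assms(4)[OF _ that] X_min[OF \<open>0 \<in> cball 0 r\<close>] by fastforce
  qed (simp add: X_min)
  moreover have "norm X < 1"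
    using \<open>X \<in> cball 0 r\<close> \<open>r < 1\<close> by simp
  ultimately show thesis
    using that by blast
qed

lemma moebius_balancing_exists:
  fixes v :: "'i \<Rightarrow> 'a::euclidean_space"
  assumes "finite I" and "I \<noteq> {}" and "inj_on v I"
    and "\<And>i. i \<in> I \<Longrightarrow> 0 \<le> w i"
    and unit: "\<And>i. i \<in> I \<Longrightarrow> norm (v i) = 1"
    and "\<And>j. j \<in> I \<Longrightarrow> 2 * w j < sum w I"
  obtains x where "norm x < 1" "(\<Sum>i\<in>I. w i *\<^sub>R moebius x (v i)) = 0"
proof -
  define F where "F = (\<lambda>y. \<Sum>i\<in>I. w i * busemann (v i) y)"
  have "continuous_on (ball 0 1) F"
    unfolding F_def using busemann_sum_has_derivative[OF _ unit]
    by (auto intro!: continuous_at_imp_continuous_on has_derivative_continuous)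
  moreover have "F 0 = 0"
    using unit by (simp add: F_def busemann_def)
  moreover obtain r where "0 \<le> r" "r < 1" "\<And>y. r < norm y \<Longrightarrow> norm y < 1 \<Longrightarrow> 0 < F y"
    unfolding F_def using busemann_sum_pos_near_boundary assms by blast
  ultimately obtain X where "norm X < 1" and X_min: "\<And>y. norm y < 1 \<Longrightarrow> F X \<le> F y"
    using continuous_on_unit_ball_attains_min[of F r] by auto
  define S where "S = (\<Sum>i\<in>I. w i *\<^sub>R moebius X (v i))"
  have deriv: "(F has_derivative (\<lambda>h. - (2 / (1 - (norm X)\<^sup>2)) * inner S h)) (at X)"
    unfolding F_def S_def using \<open>norm X < 1\<close> unit by (rule busemann_sum_has_derivative)
  have "(\<lambda>h. - (2 / (1 - (norm X)\<^sup>2)) * inner S h) = (\<lambda>h. 0)"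
    using \<open>norm X < 1\<close> X_min
    by (intro differential_zero_maxmin[where S = "ball 0 1", OF _ open_ball deriv]) auto
  then have "(2 / (1 - (norm X)\<^sup>2)) * inner S S = 0"
    by (metis minus_mult_left neg_equal_0_iff_equal)
  moreover have "(norm X)\<^sup>2 < 1"
    using \<open>norm X < 1\<close> by (simp add: abs_square_less_1)
  ultimately have "S = 0"
    by simp
  with \<open>norm X < 1\<close> show thesis
    using that by (simp add: S_def)
qed

lemma moebius_orthogonal_transformation:
  assumes "orthogonal_transformation g"
  shows "moebius (g a) (g w) = g (moebius a w)"
proof -
  interpret linear g
    using assms by (simp add: orthogonal_transformation)
  have "norm (g y) = norm y" for y
    using assms by (simp add: orthogonal_transformation)
  then show ?thesis
    by (simp add: moebius_def flip: diff scale)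
qed

section \<open>Stereographic coordinates and the map f_alpha\<close>

lemma vec3_eq_iff: "(x::real^3) = y \<longleftrightarrow> x$1 = y$1 \<and> x$2 = y$2 \<and> x$3 = y$3"
  by (simp add: vec_eq_iff forall_3)

lemma norm_power2_vec3: "(norm (x::real^3))\<^sup>2 = (x$1)\<^sup>2 + (x$2)\<^sup>2 + (x$3)\<^sup>2"
  by (simp add: norm_eq_sqrt_inner inner_vec_def sum_3 power2_eq_square)

text \<open>Inverse of the stereographic projection from the south pole onto the plane z = 0.\<close>
definition inv_stereographic :: "real \<Rightarrow> real \<Rightarrow> real^3" where
  "inv_stereographic x y = (1 / (1 + x\<^sup>2 + y\<^sup>2)) *\<^sub>R vector [2 * x, 2 * y, 1 - x\<^sup>2 - y\<^sup>2]"

lemma inv_stereographic_minus_axis: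
  "inv_stereographic x y - vector [0, 0, s]
     = vector [2 * x / (1 + (x\<^sup>2 + y\<^sup>2)), 2 * y / (1 + (x\<^sup>2 + y\<^sup>2)),
               (1 - (x\<^sup>2 + y\<^sup>2)) / (1 + (x\<^sup>2 + y\<^sup>2)) - s]"
  by (simp add: vec3_eq_iff inv_stereographic_def diff_diff_eq add.assoc)

lemma norm_inv_stereographic_minus_axis:
  "(norm (inv_stereographic x y - vector [0, 0, s]))\<^sup>2
     = ((1 - s)\<^sup>2 + (1 + s)\<^sup>2 * (x\<^sup>2 + y\<^sup>2)) / (1 + (x\<^sup>2 + y\<^sup>2))"
proof -
  define \<rho> where "\<rho> = x\<^sup>2 + y\<^sup>2"
  have "0 < 1 + \<rho>"
    by (simp add: \<rho>_def add_pos_nonneg)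
  have "(2 * x / (1 + \<rho>))\<^sup>2 + (2 * y / (1 + \<rho>))\<^sup>2 = 4 * \<rho> / (1 + \<rho>)\<^sup>2"
    by (simp add: \<rho>_def power_divide add_divide_distrib)
  moreover have "4 * \<rho> / (1 + \<rho>)\<^sup>2 + ((1 - \<rho>) / (1 + \<rho>) - s)\<^sup>2
      = ((1 - s)\<^sup>2 + (1 + s)\<^sup>2 * \<rho>) / (1 + \<rho>)"
    using \<open>0 < 1 + \<rho>\<close> by (simp add: divide_simps) (simp add: algebra_simps power2_eq_square)
  ultimately show ?thesis
    unfolding inv_stereographic_minus_axis norm_power2_vec3 \<rho>_def[symmetric] by simp
qed

lemma moebius_inv_stereographic:
  assumes "\<bar>s\<bar> < 1"
  shows "moebius (vector [0, 0, s]) (inv_stereographic x y)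
           = inv_stereographic ((1 + s) / (1 - s) * x) ((1 + s) / (1 - s) * y)"
proof -
  define \<rho> where "\<rho> = x\<^sup>2 + y\<^sup>2"
  define k where "k = (1 + s) / (1 - s)"
  define q where "q = 1 + k\<^sup>2 * \<rho>"
  have "0 < 1 + \<rho>" "0 < 1 - s"
    using assms by (auto simp: \<rho>_def add_pos_nonneg)
  then have "0 < q" and k: "k * (1 - s) = 1 + s"
    by (simp_all add: q_def k_def \<rho>_def add_pos_nonneg)
  have "(norm (vector [0, 0, s] :: real^3))\<^sup>2 = s\<^sup>2"
    by (simp add: norm_power2_vec3)
  moreover have "1 - s\<^sup>2 = k * (1 - s)\<^sup>2" "(1 - s)\<^sup>2 + (1 + s)\<^sup>2 * \<rho> = (1 - s)\<^sup>2 * q"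
    using k unfolding q_def by algebra+
  ultimately have coeff: "(1 - (norm (vector [0, 0, s] :: real^3))\<^sup>2)
      / (norm (inv_stereographic x y - vector [0, 0, s]))\<^sup>2 = k * (1 + \<rho>) / q"
    using \<open>0 < 1 + \<rho>\<close> \<open>0 < q\<close> \<open>0 < 1 - s\<close>
    by (simp add: norm_inv_stereographic_minus_axis \<rho>_def[symmetric])
  have image: "inv_stereographic (k * x) (k * y)
      = (1 / q) *\<^sub>R vector [2 * k * x, 2 * k * y, 1 - k\<^sup>2 * \<rho>]"
    by (simp add: inv_stereographic_def q_def \<rho>_def power_mult_distrib algebra_simps)
  have "k * (1 - \<rho>) - k * s * (1 + \<rho>) - s * q = 1 - k\<^sup>2 * \<rho>"
    using k unfolding q_def by algebra
  then show ?thesis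
    unfolding moebius_def coeff
    unfolding inv_stereographic_minus_axis \<rho>_def[symmetric] k_def[symmetric] image
    using \<open>0 < 1 + \<rho>\<close> \<open>0 < q\<close>
    by (simp add: vec3_eq_iff divide_simps) (simp add: algebra_simps)
qed

lemma moebius_south_pole:
  assumes "\<bar>s\<bar> < 1"
  shows "moebius (vector [0, 0, s]) (vector [0, 0, -1]) = (vector [0, 0, -1] :: real^3)"
proof -
  have "0 < 1 + s"
    using assms by simp
  then show ?thesis
    by (simp add: moebius_def norm_power2_vec3 vec3_eq_iff divide_simps) (simp add: algebra_simps power2_eq_square)
qed

lemma sph_double_arctan: "sph (2 * arctan t) \<phi> = inv_stereographic (t * cos \<phi>) (t * sin \<phi>)"
proof -
  have "0 < 1 + t\<^sup>2"
    by (simp add: add_pos_nonneg)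
  moreover have "(t * cos \<phi>)\<^sup>2 + (t * sin \<phi>)\<^sup>2 = t\<^sup>2"
    by (simp add: power_mult_distrib flip: distrib_left)
  moreover have "(sqrt (1 + t\<^sup>2))\<^sup>2 = 1 + t\<^sup>2"
    using \<open>0 < 1 + t\<^sup>2\<close> by simp
  then have "sin (2 * arctan t) = 2 * t / (1 + t\<^sup>2)" "cos (2 * arctan t) = (1 - t\<^sup>2) / (1 + t\<^sup>2)"
    unfolding sin_double cos_double sin_arctan cos_arctan
    by (simp_all add: power_divide power2_eq_square diff_divide_distrib)
  ultimately show ?thesis
    by (simp add: sph_def inv_stereographic_def vec3_eq_iff add.assoc diff_diff_eq)
qed

lemma sph_eq_inv_stereographic:
  assumes "0 \<le> \<theta>" and "\<theta> < pi"
  shows "sph \<theta> \<phi> = inv_stereographic (tan (\<theta> / 2) * cos \<phi>) (tan (\<theta> / 2) * sin \<phi>)"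
proof -
  have "2 * arctan (tan (\<theta> / 2)) = \<theta>"
    using assms by (simp add: arctan_tan)
  then show ?thesis
    using sph_double_arctan[of "tan (\<theta> / 2)" \<phi>] by simp
qed

lemma sph_arccos_exists:
  assumes "norm w = 1"
  shows "\<exists>\<phi>. 0 \<le> \<phi> \<and> \<phi> \<le> 2 * pi \<and> sph (arccos (w$3)) \<phi> = w"
proof -
  define \<theta> where "\<theta> = arccos (w$3)"
  have sq: "(w$1)\<^sup>2 + (w$2)\<^sup>2 + (w$3)\<^sup>2 = 1"
    using assms norm_power2_vec3[of w] by simp
  then have "(w$3)\<^sup>2 \<le> 1"
    using zero_le_power2[of "w$1"] zero_le_power2[of "w$2"] by linarith
  then have "\<bar>w$3\<bar> \<le> 1"
    by (simp add: abs_square_le_1)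
  then have "cos \<theta> = w$3" "sin \<theta> = sqrt (1 - (w$3)\<^sup>2)"
    by (simp_all add: \<theta>_def sin_arccos abs_le_iff)
  then have sin2: "(sin \<theta>)\<^sup>2 = (w$1)\<^sup>2 + (w$2)\<^sup>2" and "0 \<le> sin \<theta>"
    using sq \<open>\<bar>w$3\<bar> \<le> 1\<close> by (simp_all add: abs_square_le_1)
  show ?thesis
  proof (cases "sin \<theta> = 0")
    case True
    then have "w$1 = 0" "w$2 = 0"
      using sin2 by (simp_all add: sum_power2_eq_zero_iff)
    with True \<open>cos \<theta> = w$3\<close> show ?thesis
      by (intro exI[of _ 0]) (simp add: vec3_eq_iff sph_def \<theta>_def)
  next
    case False
    have "(w$1 / sin \<theta>)\<^sup>2 + (w$2 / sin \<theta>)\<^sup>2 = ((w$1)\<^sup>2 + (w$2)\<^sup>2) / (sin \<theta>)\<^sup>2"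
      by (simp add: power_divide add_divide_distrib)
    also have "\<dots> = 1"
      unfolding sin2[symmetric] using False by simp
    finally obtain \<phi> where "0 \<le> \<phi>" "\<phi> < 2 * pi" "w$1 / sin \<theta> = cos \<phi>" "w$2 / sin \<theta> = sin \<phi>"
      by (rule sincos_total_2pi)
    with False \<open>cos \<theta> = w$3\<close> show ?thesis
      by (intro exI[of _ \<phi>]) (simp add: vec3_eq_iff sph_def \<theta>_def field_simps)
  qed
qed

lemma f_alpha_sph:
  assumes "norm w = 1"
  obtains \<phi> where "sph (arccos (w$3)) \<phi> = w" "f_alpha \<alpha> w = sph (f_theta \<alpha> (arccos (w$3))) \<phi>"
proof
  define \<phi> where "\<phi> = (SOME \<phi>. 0 \<le> \<phi> \<and> \<phi> \<le> 2 * pi \<and> sph (arccos (w$3)) \<phi> = w)"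
  show "sph (arccos (w$3)) \<phi> = w"
    unfolding \<phi>_def using someI_ex[OF sph_arccos_exists[OF assms]] by blast
  show "f_alpha \<alpha> w = sph (f_theta \<alpha> (arccos (w$3))) \<phi>"
    by (simp add: f_alpha_def \<phi>_def Let_def)
qed

lemma f_alpha_eq_moebius:
  assumes "0 \<le> s" and "s < 1" and "norm w = 1"
  shows "f_alpha (2 * s / (1 + s)) w = moebius (vector [0, 0, s]) w"
proof -
  define \<alpha> where "\<alpha> = 2 * s / (1 + s)"
  define \<theta> where "\<theta> = arccos (w$3)"
  obtain \<phi> where w: "sph \<theta> \<phi> = w" and f: "f_alpha \<alpha> w = sph (f_theta \<alpha> \<theta>) \<phi>"
    unfolding \<theta>_def using f_alpha_sph[OF assms(3)] by blast
  have "\<bar>s\<bar> < 1"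
    using assms by simp
  have "0 \<le> \<theta>" "\<theta> \<le> pi"
    unfolding \<theta>_def using w by (auto simp: sph_def intro!: arccos_lbound arccos_ubound)
  show ?thesis
  proof (cases "\<theta> = pi")
    case True
    then have "w = vector [0, 0, -1]"
      using w by (simp add: sph_def)
    then show ?thesis
      using f True moebius_south_pole[OF \<open>\<bar>s\<bar> < 1\<close>] w by (simp add: \<alpha>_def f_theta_def)
  next
    case False
    define t where "t = tan (\<theta> / 2)"
    have k: "x / (1 - \<alpha>) = (1 + s) / (1 - s) * x" for x
      using assms by (simp add: \<alpha>_def field_simps)
    then have "f_alpha \<alpha> w = inv_stereographic ((1 + s) / (1 - s) * (t * cos \<phi>)) ((1 + s) / (1 - s) * (t * sin \<phi>))"
      using f False sph_double_arctan[of "t / (1 - \<alpha>)" \<phi>] by (simp add: f_theta_def t_def k mult.assoc)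
    moreover have "w = inv_stereographic (t * cos \<phi>) (t * sin \<phi>)"
      using w \<open>0 \<le> \<theta>\<close> \<open>\<theta> \<le> pi\<close> False sph_eq_inv_stereographic[of \<theta> \<phi>] by (simp add: t_def)
    ultimately show ?thesis
      using moebius_inv_stereographic[OF \<open>\<bar>s\<bar> < 1\<close>] by (simp add: \<alpha>_def)
  qed
qed

lemma rotation_onto_axis:
  fixes x :: "real^3"
  obtains g where "orthogonal_transformation g" "det (matrix g) = 1" "g x = vector [0, 0, norm x]"
proof -
  have "norm (vector [0, 0, norm x] :: real^3) = norm x"
    by (simp add: norm_eq_sqrt_inner inner_vec_def sum_3)
  then show thesis
    using rotation_exists[of x "vector [0, 0, norm x]"] that by auto
qed

lemma f_alpha_balanced_if_moebius_balanced:
  fixes v :: "'i \<Rightarrow> real^3"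
  assumes "norm x < 1" and balanced: "(\<Sum>i\<in>I. w i *\<^sub>R moebius x (v i)) = 0"
    and unit: "\<And>i. i \<in> I \<Longrightarrow> norm (v i) = 1"
  shows "\<exists>R :: real^3^3. orthogonal_matrix R \<and> det R = 1 \<and>
           (\<exists>\<alpha>. 0 \<le> \<alpha> \<and> \<alpha> < 1 \<and> (\<Sum>i\<in>I. w i *\<^sub>R f_alpha \<alpha> (R *v v i)) = 0)"
proof -
  define s where "s = norm x"
  obtain g where g: "orthogonal_transformation g" "det (matrix g) = 1" "g x = vector [0, 0, s]"
    unfolding s_def by (rule rotation_onto_axis)
  interpret linear g
    using g(1) by (simp add: orthogonal_transformation)
  have "f_alpha (2 * s / (1 + s)) (matrix g *v v i) = g (moebius x (v i))" if "i \<in> I" for i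
  proof -
    have "norm (g (v i)) = 1"
      using g(1) unit[OF that] by (simp add: orthogonal_transformation)
    then show ?thesis
      using f_alpha_eq_moebius[of s "g (v i)"] moebius_orthogonal_transformation[OF g(1), of x "v i"]
        \<open>norm x < 1\<close> g(3)
      by (simp add: s_def matrix_works linear_axioms)
  qed
  then have "(\<Sum>i\<in>I. w i *\<^sub>R f_alpha (2 * s / (1 + s)) (matrix g *v v i))
      = g (\<Sum>i\<in>I. w i *\<^sub>R moebius x (v i))"
    by (simp add: sum scale)
  also have "\<dots> = 0"
    by (simp only: balanced zero)
  finally have "(\<Sum>i\<in>I. w i *\<^sub>R f_alpha (2 * s / (1 + s)) (matrix g *v v i)) = 0" .
  moreover have "0 \<le> 2 * s / (1 + s)" "2 * s / (1 + s) < 1"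
    using \<open>norm x < 1\<close> by (simp_all add: s_def add_pos_nonneg)
  moreover have "orthogonal_matrix (matrix g)"
    using g(1) orthogonal_transformation_matrix by blast
  ultimately show ?thesis
    using g(2) by (intro exI[of _ "matrix g"] exI[of _ "2 * s / (1 + s)"] conjI)
qed

theorem lemma4:
  fixes l n :: nat and v :: "nat \<Rightarrow> real^3" and m :: "nat \<Rightarrow> nat"
  assumes distinct: "inj_on v {1..l}"
    and unit: "\<And>i. i \<in> {1..l} \<Longrightarrow> norm (v i) = 1"
    and sorted: "\<And>i j. 1 \<le> i \<Longrightarrow> i \<le> j \<Longrightarrow> j \<le> l \<Longrightarrow> m j \<le> m i"
    and total: "(\<Sum>i=1..l. m i) = n"
    and n3: "n \<ge> 3"
    and dom: "m 1 < (\<Sum>i=2..l. m i)"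
  shows "\<exists>R :: real^3^3. orthogonal_matrix R \<and> det R = 1 \<and>
           (\<exists>\<alpha>. 0 \<le> \<alpha> \<and> \<alpha> < 1 \<and>
              (\<Sum>i=1..l. real (m i) *\<^sub>R f_alpha \<alpha> (R *v v i)) = 0)"
proof -
  have "1 \<le> l"
    using dom by (cases l) auto
  then have "(\<Sum>i=1..l. m i) = m 1 + (\<Sum>i=2..l. m i)"
    by (simp add: sum.atLeast_Suc_atMost numeral_2_eq_2)
  then have "2 * real (m j) < (\<Sum>i=1..l. real (m i))" if "j \<in> {1..l}" for j
    using sorted[of 1 j] that dom by (simp flip: of_nat_sum)
  then obtain x where "norm x < 1" "(\<Sum>i=1..l. real (m i) *\<^sub>R moebius x (v i)) = 0"
    using moebius_balancing_exists[of "{1..l}" v "\<lambda>i. real (m i)"] \<open>1 \<le> l\<close> distinct unit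
    by auto
  then show ?thesis
    using unit by (rule f_alpha_balanced_if_moebius_balanced)
qed

end
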